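(* For all $\mathfrak a\in I_K$ and all $b\in\mathbb N$ we have $R_b(\mathfrak a^2,1)\neq\emptyset$.
   Context: Let $K$ be a real quadratic number field with odd discriminant $D$, ring of integers $\mathcal O_K$, conjugation $x\mapsto x'$, norm $N(x)=xx'$. Let $I_K$ be the group of nonzero fractional ideals and $N(\mathfrak a)\in\mathbb Q_{>0}$ the absolute norm of $\mathfrak a\in I_K$ (multiplicative, with $N(x\mathcal O_K)=|N(x)|$). For $b\in\mathbb N$, $\mathfrak a\in I_K$, $m\in\mathbb Z$ let $R_b(\mathfrak a,m)=\{\lambda\in\mathfrak a/b\mathfrak a : N(\lambda)/N(\mathfrak a)\equiv m\pmod b\}$ (well defined since $N(\lambda)/N(\mathfrak a)\in\mathbb Z$ for $\lambda\in\mathfrak a$ and its class mod $b$ depends only on $\lambda$ mod $b\mathfrak a$). *)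

theory Defs
  imports Complex_Main "HOL-Computational_Algebra.Squarefree" "HOL-Library.Product_Plus" "HOL-Number_Theory.Cong"
begin

text \<open>The real quadratic field K = Q(sqrt d), d > 1 squarefree, is modelled as pairs
  (p, q) of rationals standing for p + q sqrt d.  Addition is componentwise
  (Product_Plus).\<close>

type_synonym qf = "rat \<times> rat"

definition qmul :: "int \<Rightarrow> qf \<Rightarrow> qf \<Rightarrow> qf" where
  "qmul d x y = (fst x * fst y + of_int d * snd x * snd y, fst x * snd y + snd x * fst y)"

definition qconj :: "qf \<Rightarrow> qf" where
  "qconj x = (fst x, - snd x)"

definition qnorm :: "int \<Rightarrow> qf \<Rightarrow> rat" where
  "qnorm d x = fst (qmul d x (qconj x))"

definition qscale :: "rat \<Rightarrow> qf \<Rightarrow> qf" where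
  "qscale c x = (c * fst x, c * snd x)"

text \<open>Ring of integers for d = 1 mod 4: Z[(1 + sqrt d)/2], i.e. x + y (1+sqrt d)/2.\<close>
definition OK :: "qf set" where
  "OK = {(of_int x + of_int y / 2, of_int y / 2) | x y :: int. True}"

definition frac_ideal :: "int \<Rightarrow> qf set \<Rightarrow> bool" where
  "frac_ideal d A \<longleftrightarrow>
     (0 \<in> A) \<and> (\<forall>x\<in>A. \<forall>y\<in>A. x + y \<in> A) \<and> (\<forall>x\<in>A. - x \<in> A) \<and>
     (\<forall>r\<in>OK. \<forall>x\<in>A. qmul d r x \<in> A) \<and>
     A \<noteq> {0} \<and> (\<exists>c::int. c \<noteq> 0 \<and> qscale (of_int c) ` A \<subseteq> OK)"

definition idmul :: "int \<Rightarrow> qf set \<Rightarrow> qf set \<Rightarrow> qf set" where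
  "idmul d A B = {z. \<exists>xs ys. length xs = length ys \<and> set xs \<subseteq> A \<and> set ys \<subseteq> B \<and>
                      z = sum_list (map2 (qmul d) xs ys)}"

definition lattice2 :: "qf \<Rightarrow> qf \<Rightarrow> qf set" where
  "lattice2 w1 w2 = {qscale (of_int m) w1 + qscale (of_int n) w2 | m n :: int. True}"

text \<open>Absolute norm of a fractional ideal = covolume of A divided by covolume of O_K,
  computed from a Z-basis (w1, w2) of A; O_K has Z-basis (1,0), (1/2,1/2) of
  determinant 1/2.\<close>
definition idnorm :: "qf set \<Rightarrow> rat" where
  "idnorm A = (THE r. \<exists>w1 w2. A = lattice2 w1 w2 \<and>
       r = 2 * \<bar>fst w1 * snd w2 - snd w1 * fst w2\<bar>)"

end

theory Submission
  imports Defs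
begin

text \<open>Every fractional ideal has the shape A = g (\<int> a + \<int> \<beta>) with \<beta> = e + \<omega>, \<omega> = (1 + \<surd>d)/2,
  g rational and a dividing N \<beta> = e^2 + e - k = a c (where d = 4 k + 1).  Then
  N(g (m a + n \<beta>)) = g^2 a Q(m, n) for the binary quadratic form Q = a m^2 + (2 e + 1) m n + c n^2
  of discriminant d, which is primitive because d is squarefree, and N(A^2) = (g^2 a)^2.  A primitive
  form represents a value Q(m, n) prime to b; if t inverts it modulo b, then \<lambda> = (t \<alpha>) \<alpha> \<in> A^2 with
  \<alpha> = g (m a + n \<beta>) satisfies N \<lambda> / N(A^2) = (t Q(m, n))^2 \<equiv> 1 (mod b).\<close>

text \<open>Coordinates with respect to the \<int>-basis 1, \<omega> of O_K: qomega s t = s + t \<omega>.\<close>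

definition qomega :: "rat \<Rightarrow> rat \<Rightarrow> qf" where
  "qomega s t = (s + t / 2, t / 2)"

lemma qomega_eq_iff: "qomega s t = qomega s' t' \<longleftrightarrow> s = s' \<and> t = t'"
  by (auto simp: qomega_def)

lemma qomega_add: "qomega s t + qomega s' t' = qomega (s + s') (t + t')"
  by (simp add: qomega_def prod_eq_iff)

lemma qomega_0: "qomega 0 0 = 0"
  by (simp add: qomega_def prod_eq_iff)

lemma qscale_qomega: "qscale c (qomega s t) = qomega (c * s) (c * t)"
  by (simp add: qomega_def qscale_def algebra_simps)

lemma qmul_qomega:
  assumes "d = 4 * k + 1"
  shows "qmul d (qomega s t) (qomega s' t') = qomega (s * s' + of_int k * t * t') (s * t' + t * s' + t * t')"
  using assms by (simp add: qomega_def qmul_def prod_eq_iff algebra_simps)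

lemma qnorm_qomega:
  assumes "d = 4 * k + 1"
  shows "qnorm d (qomega s t) = s * s + s * t - of_int k * t * t"
  using assms by (simp add: qomega_def qnorm_def qmul_def qconj_def algebra_simps)

lemma qomega_int_in_OK: "qomega (of_int x) (of_int y) \<in> OK"
  by (auto simp: OK_def qomega_def)

lemma OK_elem_qomega:
  assumes "z \<in> OK"
  obtains x y :: int where "z = qomega (of_int x) (of_int y)"
  using assms by (auto simp: OK_def qomega_def)

lemma qnorm_qmul: "qnorm d (qmul d x y) = qnorm d x * qnorm d y"
  by (simp add: qnorm_def qmul_def qconj_def algebra_simps)

lemma qnorm_qscale: "qnorm d (qscale c x) = c * c * qnorm d x"
  by (simp add: qnorm_def qmul_def qconj_def qscale_def algebra_simps)

lemma qmul_qscale_right: "qmul d x (qscale c y) = qscale c (qmul d x y)"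
  by (simp add: qmul_def qscale_def algebra_simps)

lemma qmul_qscale_qscale: "qmul d (qscale c x) (qscale c' y) = qscale (c * c') (qmul d x y)"
  by (simp add: qmul_def qscale_def algebra_simps)

lemma qmul_of_int: "qmul d (of_int m, 0) z = qscale (of_int m) z"
  by (simp add: qmul_def qscale_def)

lemma qscale_add: "qscale c (x + y) = qscale c x + qscale c y"
  by (simp add: qscale_def prod_eq_iff algebra_simps)

lemma qscale_qscale: "qscale c (qscale c' x) = qscale (c * c') x"
  by (simp add: qscale_def)

lemma qscale_eq_iff: "c \<noteq> 0 \<Longrightarrow> qscale c z = w \<longleftrightarrow> z = qscale (1 / c) w"
  by (auto simp: qscale_def prod_eq_iff field_simps)

lemma squarefree_square_eq_mult_square:
  fixes u v d :: int
  assumes "squarefree d" "d > 1" "u * u = d * v * v"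
  shows "v = 0"
proof (rule ccontr)
  assume "v \<noteq> 0"
  obtain u' v' where uv: "u = u' * gcd u v" "v = v' * gcd u v" "coprime u' v'"
    using gcd_coprime_exists[of u v] \<open>v \<noteq> 0\<close> by auto
  have "gcd u v * gcd u v * (u' * u') = gcd u v * gcd u v * (d * v' * v')"
    using assms(3) uv by (simp add: algebra_simps)
  hence eq: "u' * u' = d * v' * v'"
    using \<open>v \<noteq> 0\<close> by simp
  have "v' dvd u' * u'"
    using eq by simp
  moreover have "coprime v' (u' * u')"
    using uv(3) by (simp add: coprime_commute)
  ultimately have "is_unit v'"
    using coprime_absorb_left by blast
  hence "\<bar>v'\<bar> = 1"
    by simp
  hence "v' * v' = 1"
    by (metis abs_mult_self_eq mult_1)
  hence "u' * u' = d"
    using eq by simp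
  hence "u' ^ 2 dvd d"
    by (simp add: power2_eq_square)
  hence "is_unit u'"
    using assms(1) squarefreeD by blast
  hence "\<bar>u'\<bar> = 1"
    by simp
  hence "u' * u' = 1"
    by (metis abs_mult_self_eq mult_1)
  thus False
    using \<open>u' * u' = d\<close> assms(2) by simp
qed

lemma omega_norm_form_nonzero:
  fixes x y k :: int
  assumes "squarefree d" "d > 1" "d = 4 * k + 1" "(x, y) \<noteq> (0, 0)"
  shows "x * x + x * y - k * y * y \<noteq> 0"
proof
  assume "x * x + x * y - k * y * y = 0"
  hence "(2 * x + y) * (2 * x + y) = d * y * y" and "y = 0 \<longrightarrow> x = 0"
    using assms(3) by (auto simp: algebra_simps)
  thus False
    using squarefree_square_eq_mult_square[OF assms(1,2)] assms(4) by blast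
qed

lemma int_submodule_eq_multiples:
  fixes S :: "int set"
  assumes add: "\<And>x y. x \<in> S \<Longrightarrow> y \<in> S \<Longrightarrow> x + y \<in> S"
    and scale: "\<And>m x. x \<in> S \<Longrightarrow> m * x \<in> S"
    and "x0 \<in> S" "x0 \<noteq> 0"
  obtains h where "h > 0" "S = range ((*) h)"
proof -
  have "\<bar>x0\<bar> \<in> S"
    using scale[OF \<open>x0 \<in> S\<close>, of "sgn x0"] by (simp add: abs_sgn mult.commute)
  hence "\<exists>n::nat. n > 0 \<and> int n \<in> S"
    using \<open>x0 \<noteq> 0\<close> by (intro exI[of _ "nat \<bar>x0\<bar>"]) simp
  then obtain n :: nat where n: "n > 0" "int n \<in> S" and least: "\<And>m. m < n \<Longrightarrow> \<not> (m > 0 \<and> int m \<in> S)"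
    using exists_least_iff[of "\<lambda>n. n > 0 \<and> int n \<in> S"] by blast
  have "S \<subseteq> range ((*) (int n))"
  proof
    fix y assume "y \<in> S"
    have "y mod int n = y + (- (y div int n)) * int n"
      by (simp add: minus_div_mult_eq_mod [symmetric])
    hence "y mod int n \<in> S"
      using add[OF \<open>y \<in> S\<close> scale[OF n(2), of "- (y div int n)"]] by simp
    moreover have "0 \<le> y mod int n" "y mod int n < int n"
      using n(1) by simp_all
    ultimately have "y mod int n = 0"
      using least[of "nat (y mod int n)"] by fastforce
    thus "y \<in> range ((*) (int n))"
      by (metis dvd_def dvd_eq_mod_eq_0 rangeI)
  qed
  moreover have "range ((*) (int n)) \<subseteq> S"
    using scale[OF n(2)] by (auto simp: mult.commute)
  ultimately show thesis
    using that[of "int n"] n(1) by auto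
qed

lemma int_lattice_eq_triangular:
  fixes M :: "(int \<times> int) set"
  assumes add: "\<And>x y x' y'. (x, y) \<in> M \<Longrightarrow> (x', y') \<in> M \<Longrightarrow> (x + x', y + y') \<in> M"
    and scale: "\<And>m x y. (x, y) \<in> M \<Longrightarrow> (m * x, m * y) \<in> M"
    and "(a, 0) \<in> M" "(s, h) \<in> M"
    and dvd_fst: "\<And>x. (x, 0) \<in> M \<Longrightarrow> a dvd x" and dvd_snd: "\<And>x y. (x, y) \<in> M \<Longrightarrow> h dvd y"
  shows "M = {(m * a + n * s, n * h) | m n. True}"
proof (intro set_eqI iffI)
  fix p assume "p \<in> M"
  then obtain x y where xy: "(x, y) \<in> M" "p = (x, y)"
    by (cases p) auto
  obtain n where "y = h * n"
    using dvd_snd[OF xy(1)] ..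
  hence n: "y = n * h"
    by (simp add: mult.commute)
  have "(x + (- n) * s, y + (- n) * h) \<in> M"
    using add[OF xy(1) scale[OF \<open>(s, h) \<in> M\<close>]] .
  hence "a dvd x - n * s"
    using n dvd_fst by simp
  then obtain m where "x - n * s = a * m" ..
  hence "p = (m * a + n * s, n * h)"
    using xy n by (simp add: algebra_simps)
  thus "p \<in> {(m * a + n * s, n * h) | m n. True}"
    by blast
next
  fix p assume "p \<in> {(m * a + n * s, n * h) | m n. True}"
  then obtain m n where "p = (m * a + n * s, n * h)"
    by blast
  thus "p \<in> M"
    using add[OF scale[OF \<open>(a, 0) \<in> M\<close>] scale[OF \<open>(s, h) \<in> M\<close>], of m n] by simp
qed

lemma int_lattice_triangular_basis:
  fixes M :: "(int \<times> int) set"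
  assumes add: "\<And>x y x' y'. (x, y) \<in> M \<Longrightarrow> (x', y') \<in> M \<Longrightarrow> (x + x', y + y') \<in> M"
    and scale: "\<And>m x y. (x, y) \<in> M \<Longrightarrow> (m * x, m * y) \<in> M"
    and "(x0, 0) \<in> M" "x0 \<noteq> 0" "(x1, y1) \<in> M" "y1 \<noteq> 0"
  obtains a h s where "a > 0" "h > 0" "M = {(m * a + n * s, n * h) | m n. True}"
proof -
  define S0 where "S0 = {x. (x, 0) \<in> M}"
  define S1 where "S1 = snd ` M"
  have S0_add: "x + x' \<in> S0" if "x \<in> S0" "x' \<in> S0" for x x'
    using add that unfolding S0_def by fastforce
  have S0_scale: "m * x \<in> S0" if "x \<in> S0" for m x
    using scale that unfolding S0_def by fastforce
  have S1_add: "y + y' \<in> S1" if "y \<in> S1" "y' \<in> S1" for y y'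
    using add that unfolding S1_def by force
  have S1_scale: "m * y \<in> S1" if "y \<in> S1" for m y
    using scale that unfolding S1_def by force
  have "x0 \<in> S0" "y1 \<in> S1"
    using assms(3,5) unfolding S0_def S1_def by force+
  obtain a where a: "a > 0" "S0 = range ((*) a)"
    using int_submodule_eq_multiples[OF S0_add S0_scale \<open>x0 \<in> S0\<close> \<open>x0 \<noteq> 0\<close>] .
  obtain h where h: "h > 0" "S1 = range ((*) h)"
    using int_submodule_eq_multiples[OF S1_add S1_scale \<open>y1 \<in> S1\<close> \<open>y1 \<noteq> 0\<close>] .
  have "h \<in> snd ` M"
    using h(2) unfolding S1_def by (metis mult_1_right rangeI)
  then obtain s where "(s, h) \<in> M"
    by force
  moreover have "(a, 0) \<in> M"
    using a(2) unfolding S0_def by (metis mem_Collect_eq mult.right_neutral rangeI)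
  moreover have "a dvd x" if "(x, 0) \<in> M" for x
  proof -
    have "x \<in> range ((*) a)"
      using that a(2) unfolding S0_def by blast
    thus ?thesis
      by auto
  qed
  moreover have "h dvd y" if "(x, y) \<in> M" for x y
    using that h(2) unfolding S1_def by force
  ultimately show thesis
    using that a(1) h(1) int_lattice_eq_triangular[OF add scale] by blast
qed

text \<open>In the coordinates of qomega, multiplication by \<omega> is (x, y) \<mapsto> (k y, x + y), as \<omega>^2 = \<omega> + k.\<close>

lemma omega_stable_triangular_form:
  fixes M :: "(int \<times> int) set" and k :: int
  assumes omega: "\<And>x y. (x, y) \<in> M \<Longrightarrow> (k * y, x + y) \<in> M"
    and "a0 > 0" "h > 0" and M: "M = {(m * a0 + n * s, n * h) | m n. True}"
  obtains a e where "a > 0" "a dvd e * e + e - k" "M = {(h * (m * a + n * e), h * n) | m n. True}"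
proof -
  have M_iff: "(x, y) \<in> M \<longleftrightarrow> (\<exists>m n. x = m * a0 + n * s \<and> y = n * h)" for x y
    unfolding M by blast
  have "(a0, 0) \<in> M"
    unfolding M_iff by (rule exI[of _ 1], rule exI[of _ 0]) simp
  hence "(0, a0) \<in> M"
    using omega by fastforce
  then obtain m a where ma: "0 = m * a0 + a * s" "a0 = a * h"
    using M_iff by blast
  hence "a > 0"
    using \<open>a0 > 0\<close> \<open>h > 0\<close> by (simp add: zero_less_mult_iff)
  define e where "e = - m"
  have "a * s = a * (h * e)"
    using ma unfolding e_def by (simp add: algebra_simps)
  hence s: "s = h * e"
    using \<open>a > 0\<close> by simp
  have "(s, h) \<in> M"
    unfolding M_iff by (rule exI[of _ 0], rule exI[of _ 1]) simp
  hence "(k * h, s + h) \<in> M"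
    by (rule omega)
  then obtain m' n' where mn': "k * h = m' * a0 + n' * s" "s + h = n' * h"
    using M_iff by blast
  have "h * (e + 1) = h * n'"
    using mn'(2) unfolding s by algebra
  hence "n' = e + 1"
    using \<open>h > 0\<close> by simp
  hence "h * (e * e + e - k) = h * (a * (- m'))"
    using mn'(1) unfolding ma(2) s by algebra
  hence "e * e + e - k = a * (- m')"
    using \<open>h > 0\<close> by (subst (asm) mult_cancel_left) simp
  hence "a dvd e * e + e - k"
    by (rule dvdI)
  moreover have "M = {(h * (m * a + n * e), h * n) | m n. True}"
    unfolding M ma(2) s by (simp add: algebra_simps)
  ultimately show thesis
    using that \<open>a > 0\<close> by blast
qed

lemma omega_stable_int_lattice_form:
  fixes M :: "(int \<times> int) set" and k :: int
  assumes add: "\<And>x y x' y'. (x, y) \<in> M \<Longrightarrow> (x', y') \<in> M \<Longrightarrow> (x + x', y + y') \<in> M"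
    and scale: "\<And>m x y. (x, y) \<in> M \<Longrightarrow> (m * x, m * y) \<in> M"
    and omega: "\<And>x y. (x, y) \<in> M \<Longrightarrow> (k * y, x + y) \<in> M"
    and anisotropic: "\<And>x y. (x, y) \<noteq> (0, 0) \<Longrightarrow> x * x + x * y - k * y * y \<noteq> 0"
    and nonzero: "(x0, y0) \<in> M" "(x0, y0) \<noteq> (0, 0)"
  obtains h a e where "h > 0" "a > 0" "a dvd e * e + e - k"
    "M = {(h * (m * a + n * e), h * n) | m n. True}"
proof -
  define N where "N = x0 * x0 + x0 * y0 - k * y0 * y0"
  \<comment> \<open>(x0 + y0) z - y0 \<omega> z = (N z, 0) for z = x0 + y0 \<omega>\<close>
  have "((x0 + y0) * x0 + (- y0) * (k * y0), (x0 + y0) * y0 + (- y0) * (x0 + y0)) \<in> M"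
    using add[OF scale[OF nonzero(1)] scale[OF omega[OF nonzero(1)]]] .
  hence "(N, 0) \<in> M"
    unfolding N_def by (simp add: algebra_simps)
  moreover have "N \<noteq> 0"
    unfolding N_def using anisotropic[OF nonzero(2)] .
  moreover have "(0, N) \<in> M"
    using omega[OF \<open>(N, 0) \<in> M\<close>] by simp
  ultimately obtain a0 h s where "a0 > 0" "h > 0" "M = {(m * a0 + n * s, n * h) | m n. True}"
    using int_lattice_triangular_basis[OF add scale, of N 0 N] by blast
  then obtain a e where "a > 0" "a dvd e * e + e - k" "M = {(h * (m * a + n * e), h * n) | m n. True}"
    using omega_stable_triangular_form[OF omega] by blast
  thus thesis
    using that \<open>h > 0\<close> by blast
qed

definition int_coords :: "int \<Rightarrow> qf set \<Rightarrow> (int \<times> int) set" where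
  "int_coords c A = {(x, y). \<exists>z\<in>A. qscale (of_int c) z = qomega (of_int x) (of_int y)}"

lemma int_coords_add:
  assumes "frac_ideal d A" "(x, y) \<in> int_coords c A" "(x', y') \<in> int_coords c A"
  shows "(x + x', y + y') \<in> int_coords c A"
proof -
  obtain z z' where "z \<in> A" "z' \<in> A" "qscale (of_int c) z = qomega (of_int x) (of_int y)"
    "qscale (of_int c) z' = qomega (of_int x') (of_int y')"
    using assms(2,3) unfolding int_coords_def by blast
  moreover from this have "z + z' \<in> A"
    using assms(1) unfolding frac_ideal_def by blast
  ultimately have "qscale (of_int c) (z + z') = qomega (of_int (x + x')) (of_int (y + y'))"
    by (simp add: qscale_add qomega_add)
  with \<open>z + z' \<in> A\<close> show ?thesis
    unfolding int_coords_def by blast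
qed

lemma int_coords_scale:
  assumes "frac_ideal d A" "(x, y) \<in> int_coords c A"
  shows "(m * x, m * y) \<in> int_coords c A"
proof -
  obtain z where z: "z \<in> A" "qscale (of_int c) z = qomega (of_int x) (of_int y)"
    using assms(2) unfolding int_coords_def by blast
  have "qmul d (qomega (of_int m) 0) z \<in> A"
    using assms(1) z(1) qomega_int_in_OK[of m 0] unfolding frac_ideal_def by simp
  moreover have
    "qscale (of_int c) (qmul d (qomega (of_int m) 0) z) = qomega (of_int (m * x)) (of_int (m * y))"
  proof -
    have "qscale (of_int c) (qmul d (qomega (of_int m) 0) z) = qscale (of_int m) (qscale (of_int c) z)"
      by (simp add: qomega_def qmul_of_int qscale_qscale mult.commute)
    thus ?thesis
      using z(2) by (simp add: qscale_qomega)
  qed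
  ultimately show ?thesis
    unfolding int_coords_def by blast
qed

lemma int_coords_omega:
  assumes "frac_ideal d A" "d = 4 * k + 1" "(x, y) \<in> int_coords c A"
  shows "(k * y, x + y) \<in> int_coords c A"
proof -
  obtain z where z: "z \<in> A" "qscale (of_int c) z = qomega (of_int x) (of_int y)"
    using assms(3) unfolding int_coords_def by blast
  have "qmul d (qomega 0 1) z \<in> A"
    using assms(1) z(1) qomega_int_in_OK[of 0 1] unfolding frac_ideal_def by simp
  moreover have "qscale (of_int c) (qmul d (qomega 0 1) z) = qomega (of_int (k * y)) (of_int (x + y))"
    using z(2) by (simp add: qmul_qscale_right[symmetric] qmul_qomega[OF assms(2)])
  ultimately show ?thesis
    unfolding int_coords_def by blast
qed

lemma image_int_coords:
  assumes "c \<noteq> 0" "qscale (of_int c) ` A \<subseteq> OK"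
  shows "A = (\<lambda>(x, y). qscale (1 / of_int c) (qomega (of_int x) (of_int y))) ` int_coords c A"
proof (intro set_eqI iffI)
  fix z assume "z \<in> A"
  hence "qscale (of_int c) z \<in> OK"
    using assms(2) by blast
  then obtain x y where "qscale (of_int c) z = qomega (of_int x) (of_int y)"
    by (rule OK_elem_qomega)
  moreover from this have "(x, y) \<in> int_coords c A"
    using \<open>z \<in> A\<close> unfolding int_coords_def by blast
  ultimately show "z \<in> (\<lambda>(x, y). qscale (1 / of_int c) (qomega (of_int x) (of_int y))) ` int_coords c A"
    using assms(1) by (auto simp: qscale_eq_iff intro: image_eqI[where x = "(x, y)"])
next
  fix z assume "z \<in> (\<lambda>(x, y). qscale (1 / of_int c) (qomega (of_int x) (of_int y))) ` int_coords c A"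
  then obtain x y z' where "z = qscale (1 / of_int c) (qomega (of_int x) (of_int y))" "z' \<in> A"
    "qscale (of_int c) z' = qomega (of_int x) (of_int y)"
    unfolding int_coords_def by auto
  thus "z \<in> A"
    using assms(1) by (simp add: qscale_eq_iff)
qed

lemma frac_ideal_standard_basis:
  assumes "squarefree d" "d > 1" "d = 4 * k + 1" "frac_ideal d A"
  obtains g :: rat and a e :: int where "g \<noteq> 0" "a > 0" "a dvd e * e + e - k"
    "A = lattice2 (qscale g (qomega (of_int a) 0)) (qscale g (qomega (of_int e) 1))"
proof -
  obtain c :: int where c: "c \<noteq> 0" "qscale (of_int c) ` A \<subseteq> OK"
    using assms(4) unfolding frac_ideal_def by blast
  obtain z0 where "z0 \<in> A" "z0 \<noteq> 0"
    using assms(4) unfolding frac_ideal_def by blast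
  define M where "M = int_coords c A"
  define f where "f = (\<lambda>(x, y). qscale (1 / of_int c) (qomega (of_int x) (of_int y)))"
  have A: "A = f ` M"
    unfolding f_def M_def using c by (rule image_int_coords)
  obtain p where "p \<in> M" "z0 = f p"
    using \<open>z0 \<in> A\<close> unfolding A by blast
  then obtain x0 y0 where x0y0: "(x0, y0) \<in> M" "z0 = f (x0, y0)"
    by (cases p) simp
  have nonzero: "(x0, y0) \<noteq> (0, 0)"
    using x0y0(2) \<open>z0 \<noteq> 0\<close> unfolding f_def by (auto simp: qomega_0 qscale_def zero_prod_def)
  obtain h a e where "h > 0" "a > 0" "a dvd e * e + e - k"
    and M: "M = {(h * (m * a + n * e), h * n) | m n. True}"
    unfolding M_def
    by (rule omega_stable_int_lattice_form[OF int_coords_add[OF assms(4)] int_coords_scale[OF assms(4)]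
      int_coords_omega[OF assms(4,3)] omega_norm_form_nonzero[OF assms(1-3)] x0y0(1)[unfolded M_def] nonzero])
  define g where "g = of_int h / (of_int c :: rat)"
  have f_std: "f (h * (m * a + n * e), h * n)
      = qscale (of_int m) (qscale g (qomega (of_int a) 0))
        + qscale (of_int n) (qscale g (qomega (of_int e) 1))"
    for m n
    using c(1) unfolding f_def g_def by (simp add: qscale_def qomega_def prod_eq_iff field_simps)
  have "f ` M = {f (h * (m * a + n * e), h * n) | m n. True}"
    unfolding M by blast
  hence "A = lattice2 (qscale g (qomega (of_int a) 0)) (qscale g (qomega (of_int e) 1))"
    unfolding A f_std lattice2_def .
  moreover have "g \<noteq> 0"
    using \<open>h > 0\<close> c(1) unfolding g_def by simp
  ultimately show thesis
    using that \<open>a > 0\<close> \<open>a dvd e * e + e - k\<close> by blast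
qed

definition det2 :: "qf \<Rightarrow> qf \<Rightarrow> rat" where
  "det2 x y = fst x * snd y - snd x * fst y"

lemma lattice2_memI: "qscale (of_int m) w1 + qscale (of_int n) w2 \<in> lattice2 w1 w2"
  by (auto simp: lattice2_def)

lemma lattice2_basis: "w1 \<in> lattice2 w1 w2" "w2 \<in> lattice2 w1 w2"
  using lattice2_memI[of 1 w1 0 w2] lattice2_memI[of 0 w1 1 w2]
  by (simp_all add: qscale_def zero_prod_def[symmetric])

lemma lattice2_add: "x \<in> lattice2 w1 w2 \<Longrightarrow> y \<in> lattice2 w1 w2 \<Longrightarrow> x + y \<in> lattice2 w1 w2"
proof -
  assume "x \<in> lattice2 w1 w2" "y \<in> lattice2 w1 w2"
  then obtain m n m' n' where "x = qscale (of_int m) w1 + qscale (of_int n) w2"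
    "y = qscale (of_int m') w1 + qscale (of_int n') w2"
    unfolding lattice2_def by blast
  hence "x + y = qscale (of_int (m + m')) w1 + qscale (of_int (n + n')) w2"
    by (simp add: qscale_def prod_eq_iff algebra_simps)
  thus ?thesis
    by (simp only: lattice2_memI)
qed

lemma lattice2_qscale: "x \<in> lattice2 w1 w2 \<Longrightarrow> qscale (of_int k) x \<in> lattice2 w1 w2"
proof -
  assume "x \<in> lattice2 w1 w2"
  then obtain m n where "x = qscale (of_int m) w1 + qscale (of_int n) w2"
    unfolding lattice2_def by blast
  hence "qscale (of_int k) x = qscale (of_int (k * m)) w1 + qscale (of_int (k * n)) w2"
    by (simp add: qscale_def prod_eq_iff algebra_simps)
  thus ?thesis
    by (simp only: lattice2_memI)
qed

lemma lattice2_qscale_mem: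
  assumes "z \<in> lattice2 w1 w2"
  shows "qscale c z \<in> lattice2 (qscale c w1) (qscale c w2)"
proof -
  obtain m n where "z = qscale (of_int m) w1 + qscale (of_int n) w2"
    using assms unfolding lattice2_def by blast
  hence "qscale c z = qscale (of_int m) (qscale c w1) + qscale (of_int n) (qscale c w2)"
    by (simp add: qscale_def algebra_simps)
  thus ?thesis
    by (simp only: lattice2_memI)
qed

lemma lattice2_zero: "0 \<in> lattice2 w1 w2"
  using lattice2_memI[of 0 w1 0 w2] by (simp add: qscale_def zero_prod_def)

lemma det2_lattice2_multiple:
  assumes "u1 \<in> lattice2 w1 w2" "u2 \<in> lattice2 w1 w2"
  obtains k :: int where "det2 u1 u2 = of_int k * det2 w1 w2"
proof -
  obtain m1 n1 m2 n2 where "u1 = qscale (of_int m1) w1 + qscale (of_int n1) w2"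
    "u2 = qscale (of_int m2) w1 + qscale (of_int n2) w2"
    using assms unfolding lattice2_def by blast
  hence "det2 u1 u2 = of_int (m1 * n2 - n1 * m2) * det2 w1 w2"
    by (simp add: det2_def qscale_def algebra_simps)
  thus thesis
    by (rule that)
qed

lemma abs_det2_lattice2_eq:
  assumes "lattice2 w1 w2 = lattice2 u1 u2"
  shows "\<bar>det2 w1 w2\<bar> = \<bar>det2 u1 u2\<bar>"
proof -
  obtain k where k: "det2 u1 u2 = of_int k * det2 w1 w2"
    using det2_lattice2_multiple[of u1 w1 w2 u2] lattice2_basis assms by metis
  obtain k' where k': "det2 w1 w2 = of_int k' * det2 u1 u2"
    using det2_lattice2_multiple[of w1 u1 u2 w2] lattice2_basis assms by metis
  show ?thesis
  proof (cases "det2 w1 w2 = 0")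
    case True
    thus ?thesis
      using k by simp
  next
    case False
    have "det2 w1 w2 = of_int (k' * k) * det2 w1 w2"
      using k k' by (simp add: mult.assoc)
    hence "k' * k = 1"
      using False by (metis mult_cancel_right1 of_int_eq_1_iff)
    hence "\<bar>k\<bar> = 1"
      using zmult_eq_1_iff by auto
    thus ?thesis
      using k by (simp add: abs_mult flip: of_int_abs)
  qed
qed

lemma idnorm_lattice2: "idnorm (lattice2 w1 w2) = 2 * \<bar>det2 w1 w2\<bar>"
  unfolding idnorm_def
proof (rule the_equality)
  fix r
  assume "\<exists>u1 u2. lattice2 w1 w2 = lattice2 u1 u2 \<and> r = 2 * \<bar>fst u1 * snd u2 - snd u1 * fst u2\<bar>"
  thus "r = 2 * \<bar>det2 w1 w2\<bar>"
    using abs_det2_lattice2_eq unfolding det2_def by metis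
qed (rule exI[of _ w1], rule exI[of _ w2], simp add: det2_def)

lemma qmul_mem_idmul: "x \<in> A \<Longrightarrow> y \<in> B \<Longrightarrow> qmul d x y \<in> idmul d A B"
  unfolding idmul_def by (rule CollectI, rule exI[of _ "[x]"], rule exI[of _ "[y]"]) simp

lemma idmul_add: "z \<in> idmul d A B \<Longrightarrow> z' \<in> idmul d A B \<Longrightarrow> z + z' \<in> idmul d A B"
  unfolding idmul_def
  by (clarsimp, rule_tac x = "xs @ xsa" in exI, rule_tac x = "ys @ ysa" in exI) simp

lemma qscale_sum_map2_qmul:
  "length xs = length ys \<Longrightarrow> qscale (c * c') (sum_list (map2 (qmul d) xs ys))
     = sum_list (map2 (qmul d) (map (qscale c) xs) (map (qscale c') ys))"
proof (induction xs arbitrary: ys)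
  case Nil
  thus ?case
    by (simp add: qscale_def zero_prod_def)
next
  case (Cons x xs)
  thus ?case
    by (cases ys) (auto simp: qscale_add qmul_qscale_qscale)
qed

lemma idmul_qscale_mem:
  assumes "z \<in> idmul d A B" "\<And>x. x \<in> A \<Longrightarrow> qscale c x \<in> A'" "\<And>y. y \<in> B \<Longrightarrow> qscale c' y \<in> B'"
  shows "qscale (c * c') z \<in> idmul d A' B'"
proof -
  obtain xs ys where "length xs = length ys" "set xs \<subseteq> A" "set ys \<subseteq> B"
    "z = sum_list (map2 (qmul d) xs ys)"
    using assms(1) unfolding idmul_def by blast
  thus ?thesis
    using assms(2,3) qscale_sum_map2_qmul unfolding idmul_def
    by (intro CollectI exI[of _ "map (qscale c) xs"] exI[of _ "map (qscale c') ys"]) auto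
qed

lemma idmul_qscale:
  assumes "\<And>x. x \<in> A \<Longrightarrow> qscale c x \<in> A" and "z \<in> idmul d A B"
  shows "qscale c z \<in> idmul d A B"
  using idmul_qscale_mem[OF assms(2) assms(1), of 1 B] by (simp add: qscale_def)

lemma idmul_subset_lattice2:
  assumes "\<And>x y. x \<in> A \<Longrightarrow> y \<in> B \<Longrightarrow> qmul d x y \<in> lattice2 w1 w2"
  shows "idmul d A B \<subseteq> lattice2 w1 w2"
proof -
  have "sum_list (map2 (qmul d) xs ys) \<in> lattice2 w1 w2"
    if "length xs = length ys" "set xs \<subseteq> A" "set ys \<subseteq> B" for xs ys
    using that
  proof (induction xs arbitrary: ys)
    case Nil
    thus ?case
      by (simp add: lattice2_zero)
  next
    case (Cons x xs)
    then obtain y ys' where "ys = y # ys'"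
      by (cases ys) auto
    thus ?case
      using Cons assms by (simp add: lattice2_add)
  qed
  thus ?thesis
    unfolding idmul_def by blast
qed

lemma lattice2_subset_idmul:
  assumes "\<And>k x. x \<in> A \<Longrightarrow> qscale (of_int k) x \<in> A"
    and "w1 \<in> idmul d A B" "w2 \<in> idmul d A B"
  shows "lattice2 w1 w2 \<subseteq> idmul d A B"
proof
  fix z assume "z \<in> lattice2 w1 w2"
  then obtain m n where "z = qscale (of_int m) w1 + qscale (of_int n) w2"
    unfolding lattice2_def by blast
  thus "z \<in> idmul d A B"
    using idmul_add[OF idmul_qscale[OF assms(1) assms(2)] idmul_qscale[OF assms(1) assms(3)]] by simp
qed

lemma qmul_lattice2_comb:
  "qmul d (qscale (of_int m) x + qscale (of_int n) y) (qscale (of_int m') x + qscale (of_int n') y)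
     = qscale (of_int (m * m')) (qmul d x x) + qscale (of_int (m * n' + n * m')) (qmul d x y)
       + qscale (of_int (n * n')) (qmul d y y)"
  by (simp add: qmul_def qscale_def prod_eq_iff algebra_simps)

lemma idmul_self_lattice2:
  assumes "qmul d x x \<in> lattice2 w1 w2" "qmul d x y \<in> lattice2 w1 w2" "qmul d y y \<in> lattice2 w1 w2"
    and "w1 \<in> idmul d (lattice2 x y) (lattice2 x y)" "w2 \<in> idmul d (lattice2 x y) (lattice2 x y)"
  shows "idmul d (lattice2 x y) (lattice2 x y) = lattice2 w1 w2"
proof
  show "idmul d (lattice2 x y) (lattice2 x y) \<subseteq> lattice2 w1 w2"
  proof (rule idmul_subset_lattice2)
    fix u v assume "u \<in> lattice2 x y" "v \<in> lattice2 x y"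
    then obtain m n m' n' where "u = qscale (of_int m) x + qscale (of_int n) y"
      "v = qscale (of_int m') x + qscale (of_int n') y"
      unfolding lattice2_def by blast
    thus "qmul d u v \<in> lattice2 w1 w2"
      using assms(1-3) by (simp only: qmul_lattice2_comb lattice2_add lattice2_qscale)
  qed
  show "lattice2 w1 w2 \<subseteq> idmul d (lattice2 x y) (lattice2 x y)"
    using lattice2_subset_idmul[OF lattice2_qscale assms(4,5)] .
qed

lemma idmul_self_lattice2_qscale:
  assumes "idmul d (lattice2 x y) (lattice2 x y) = lattice2 w1 w2"
  shows "idmul d (lattice2 (qscale g x) (qscale g y)) (lattice2 (qscale g x) (qscale g y))
    = lattice2 (qscale (g * g) w1) (qscale (g * g) w2)"
proof (rule idmul_self_lattice2)
  have "qmul d u v \<in> lattice2 w1 w2" if "u \<in> {x, y}" "v \<in> {x, y}" for u v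
    using that assms[symmetric] by (auto intro: qmul_mem_idmul lattice2_basis)
  thus "qmul d (qscale g x) (qscale g x) \<in> lattice2 (qscale (g * g) w1) (qscale (g * g) w2)"
    "qmul d (qscale g x) (qscale g y) \<in> lattice2 (qscale (g * g) w1) (qscale (g * g) w2)"
    "qmul d (qscale g y) (qscale g y) \<in> lattice2 (qscale (g * g) w1) (qscale (g * g) w2)"
    unfolding qmul_qscale_qscale by (simp_all add: lattice2_qscale_mem)
  have scale: "qscale g u \<in> lattice2 (qscale g x) (qscale g y)" if "u \<in> lattice2 x y" for u
    using that by (rule lattice2_qscale_mem)
  have w: "w1 \<in> idmul d (lattice2 x y) (lattice2 x y)" "w2 \<in> idmul d (lattice2 x y) (lattice2 x y)"
    unfolding assms by (rule lattice2_basis)+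
  show "qscale (g * g) w1 \<in> idmul d (lattice2 (qscale g x) (qscale g y)) (lattice2 (qscale g x) (qscale g y))"
    "qscale (g * g) w2 \<in> idmul d (lattice2 (qscale g x) (qscale g y)) (lattice2 (qscale g x) (qscale g y))"
    using idmul_qscale_mem[OF w(1) scale scale] idmul_qscale_mem[OF w(2) scale scale] by blast+
qed

lemma standard_form_primitive:
  fixes a c e k d x :: int
  assumes "squarefree d" "d = 4 * k + 1" "e * e + e - k = a * c"
    and "x dvd a" "x dvd 2 * e + 1" "x dvd c"
  shows "is_unit x"
proof -
  have "x ^ 2 dvd (2 * e + 1) * (2 * e + 1) - 4 * a * c"
    using assms(4-6) by (simp add: power2_eq_square mult_dvd_mono dvd_diff mult.assoc dvd_mult2)
  moreover have "(2 * e + 1) * (2 * e + 1) - 4 * a * c = d"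
    using assms(2,3) by algebra
  ultimately show ?thesis
    using assms(1) squarefreeD by metis
qed

lemma standard_form_bezout:
  fixes a c e k d :: int
  assumes "squarefree d" "d = 4 * k + 1" "e * e + e - k = a * c"
  obtains h a1 b1 u v p q
  where "a = h * a1" "2 * e + 1 = h * b1" "u * a1 + v * b1 = 1" "p * h + q * c = 1"
proof -
  define h where "h = gcd a (2 * e + 1)"
  have "2 * e + 1 \<noteq> 0"
    by presburger
  hence "h \<noteq> 0"
    unfolding h_def by simp
  have "h dvd a" "h dvd 2 * e + 1"
    unfolding h_def by simp_all
  then obtain a1 b1 where a1: "a = h * a1" and b1: "2 * e + 1 = h * b1"
    by (meson dvdE)
  obtain u v where "u * a + v * (2 * e + 1) = h"
    using bezout_int[of a "2 * e + 1"] unfolding h_def by blast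
  hence "h * (u * a1 + v * b1) = h * 1"
    unfolding a1 b1 by (simp add: algebra_simps)
  hence "u * a1 + v * b1 = 1"
    using \<open>h \<noteq> 0\<close> by simp
  moreover have "coprime h c"
  proof (rule coprimeI)
    fix x assume "x dvd h" "x dvd c"
    thus "is_unit x"
      using standard_form_primitive[OF assms] \<open>h dvd a\<close> \<open>h dvd 2 * e + 1\<close> by (meson dvd_trans)
  qed
  then obtain p q where "p * h + q * c = 1"
    using bezout_int[of h c] by (metis coprime_iff_gcd_eq_1)
  ultimately show thesis
    using that a1 b1 by blast
qed

text \<open>With \<beta> = e + \<omega> one has \<beta>^2 = (2 e + 1) \<beta> - a c, so L L is spanned by g^2 a^2, g^2 a \<beta>, g^2 \<beta>^2;
  the integer relations of standard_form_bezout turn these three generators into the basis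
  g^2 a a1, g^2 (h \<beta> - v a c).\<close>

lemma idnorm_idmul_standard_lattice:
  fixes g :: rat and a c e k d :: int
  assumes "squarefree d" "d = 4 * k + 1" "e * e + e - k = a * c"
  defines "L \<equiv> lattice2 (qscale g (qomega (of_int a) 0)) (qscale g (qomega (of_int e) 1))"
  shows "idnorm (idmul d L L) = (g * g * of_int a) ^ 2"
proof -
  obtain h a1 b1 u v p q where a1: "a = h * a1" and b1: "2 * e + 1 = h * b1"
    and uv: "u * a1 + v * b1 = 1" and pq: "p * h + q * c = 1"
    using standard_form_bezout[OF assms(1-3)] .
  have rels: "(of_int a :: rat) = of_int h * of_int a1" "2 * of_int e + 1 = (of_int h * of_int b1 :: rat)"
    "of_int u * of_int a1 + of_int v * of_int b1 = (1 :: rat)"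
    "of_int p * of_int h + of_int q * of_int c = (1 :: rat)"
    "of_int e * of_int e + of_int e - of_int k = (of_int a * of_int c :: rat)"
    using a1 arg_cong[OF b1, of "of_int :: int \<Rightarrow> rat"] arg_cong[OF uv, of "of_int :: int \<Rightarrow> rat"]
      arg_cong[OF pq, of "of_int :: int \<Rightarrow> rat"] arg_cong[OF assms(3), of "of_int :: int \<Rightarrow> rat"]
    by simp_all
  define X where "X = qomega (of_int a) 0"
  define Y where "Y = qomega (of_int e) 1"
  define W1 where "W1 = qomega (of_int (a * a1)) 0"
  define W2 where "W2 = qomega (of_int (h * e - v * a * c)) (of_int h)"
  note qomega_simps = qmul_qomega[OF assms(2)] qscale_qomega qomega_add qomega_eq_iff
  have XX: "qmul d X X = qscale (of_int h) W1 + qscale (of_int 0) W2"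
    unfolding X_def W1_def W2_def using a1 by (simp add: qomega_simps)
  have XY: "qmul d X Y = qscale (of_int (v * c)) W1 + qscale (of_int a1) W2"
    unfolding X_def Y_def W1_def W2_def by (simp add: qomega_simps; use rels in algebra)
  have YY: "qmul d Y Y = qscale (of_int (- u * c)) W1 + qscale (of_int b1) W2"
    unfolding Y_def W1_def W2_def by (simp add: qomega_simps; use rels in algebra)
  have W1: "W1 = qmul d (qscale (of_int p) X) X + qmul d (qscale (of_int (q * b1)) X) Y
      + qmul d (qscale (of_int (- q * a1)) Y) Y"
    unfolding X_def Y_def W1_def by (simp add: qomega_simps; use rels in algebra)
  have W2: "W2 = qmul d (qscale (of_int u) X) Y + qmul d (qscale (of_int v) Y) Y"
    unfolding X_def Y_def W2_def by (simp add: qomega_simps; use rels in algebra)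
  have "idmul d (lattice2 X Y) (lattice2 X Y) = lattice2 W1 W2"
  proof (rule idmul_self_lattice2)
    show "qmul d X X \<in> lattice2 W1 W2" "qmul d X Y \<in> lattice2 W1 W2" "qmul d Y Y \<in> lattice2 W1 W2"
      unfolding XX XY YY by (rule lattice2_memI)+
    show "W1 \<in> idmul d (lattice2 X Y) (lattice2 X Y)" "W2 \<in> idmul d (lattice2 X Y) (lattice2 X Y)"
      unfolding W1 W2 by (intro idmul_add qmul_mem_idmul lattice2_qscale lattice2_basis)+
  qed
  hence square: "idmul d L L = lattice2 (qscale (g * g) W1) (qscale (g * g) W2)"
    unfolding L_def X_def[symmetric] Y_def[symmetric] by (rule idmul_self_lattice2_qscale)
  have det: "det2 (qscale (g * g) W1) (qscale (g * g) W2) = (g * g * of_int a) ^ 2 / 2"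
    using a1 unfolding W1_def W2_def det2_def by (simp add: qscale_def qomega_def power2_eq_square)
  show ?thesis
    unfolding square idnorm_lattice2 det by simp
qed

lemma qnorm_standard_lattice_elem:
  fixes g :: rat and a c e k d m n :: int
  assumes "d = 4 * k + 1" "e * e + e - k = a * c"
  shows "qnorm d (qscale (of_int m) (qscale g (qomega (of_int a) 0))
      + qscale (of_int n) (qscale g (qomega (of_int e) 1)))
     = g * g * of_int a * of_int (a * m * m + (2 * e + 1) * m * n + c * n * n)"
proof -
  have "qscale (of_int m) (qscale g (qomega (of_int a) 0))
      + qscale (of_int n) (qscale g (qomega (of_int e) 1))
      = qscale g (qomega (of_int (m * a + n * e)) (of_int n))"
    by (simp add: qscale_qomega qomega_add algebra_simps)
  moreover have int_identity: "(m * a + n * e) * (m * a + n * e) + (m * a + n * e) * n - k * n * n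
      = a * (a * m * m + (2 * e + 1) * m * n + c * n * n)"
    using assms(2) by algebra
  hence "qnorm d (qomega (of_int (m * a + n * e)) (of_int n))
      = of_int a * of_int (a * m * m + (2 * e + 1) * m * n + c * n * n)"
    unfolding qnorm_qomega[OF assms(1)] using arg_cong[OF int_identity, of "of_int :: int \<Rightarrow> rat"] by simp
  ultimately show ?thesis
    by (simp add: qnorm_qscale)
qed

lemma standard_lattice_square_norm_quotient:
  fixes g :: rat and a c e k d x y t :: int
  assumes "squarefree d" "d = 4 * k + 1" "e * e + e - k = a * c" "g \<noteq> 0" "a \<noteq> 0"
  defines "L \<equiv> lattice2 (qscale g (qomega (of_int a) 0)) (qscale g (qomega (of_int e) 1))"
  obtains l where "l \<in> idmul d L L"
    "qnorm d l / idnorm (idmul d L L) = of_int ((t * (a * x * x + (2 * e + 1) * x * y + c * y * y)) ^ 2)"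
proof -
  define \<alpha> where "\<alpha> = qscale (of_int x) (qscale g (qomega (of_int a) 0))
    + qscale (of_int y) (qscale g (qomega (of_int e) 1))"
  have "qmul d (qscale (of_int t) \<alpha>) \<alpha> \<in> idmul d L L"
    unfolding \<alpha>_def L_def by (intro qmul_mem_idmul lattice2_qscale lattice2_memI)
  moreover have "qnorm d (qmul d (qscale (of_int t) \<alpha>) \<alpha>)
      = (g * g * of_int a) ^ 2 * of_int ((t * (a * x * x + (2 * e + 1) * x * y + c * y * y)) ^ 2)"
    unfolding \<alpha>_def qnorm_qmul qnorm_qscale qnorm_standard_lattice_elem[OF assms(2,3)]
    by (simp add: power2_eq_square)
  moreover have "idnorm (idmul d L L) = (g * g * of_int a) ^ 2"
    unfolding L_def using assms(1-3) by (rule idnorm_idmul_standard_lattice)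
  ultimately show thesis
    using that assms(4,5) by simp
qed

lemma prime_dvd_prod_primes_iff:
  fixes P :: "'a :: factorial_semiring set"
  assumes "finite P" "\<And>q. q \<in> P \<Longrightarrow> prime q" "prime p"
  shows "p dvd (\<Prod>q\<in>P. q) \<longleftrightarrow> p \<in> P"
proof -
  have "p dvd (\<Prod>q\<in>P. q) \<longleftrightarrow> (\<exists>q\<in>P. p dvd q)"
    using assms(1,3) by (rule prime_dvd_prod_iff)
  also have "\<dots> \<longleftrightarrow> p \<in> P"
  proof
    assume "\<exists>q\<in>P. p dvd q"
    then obtain q where "q \<in> P" "p dvd q" ..
    have "p = q"
      using assms(3) assms(2)[OF \<open>q \<in> P\<close>] \<open>p dvd q\<close> by (rule primes_dvd_imp_eq)
    thus "p \<in> P"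
      using \<open>q \<in> P\<close> by simp
  next
    assume "p \<in> P"
    thus "\<exists>q\<in>P. p dvd q"
      by (intro bexI[of _ p]) simp_all
  qed
  finally show ?thesis .
qed

lemma coprime_if_no_common_prime_divisor:
  fixes m n :: "'a :: factorial_semiring"
  assumes "n \<noteq> 0" "\<And>p. prime p \<Longrightarrow> p dvd n \<Longrightarrow> \<not> p dvd m"
  shows "coprime m n"
proof (rule ccontr)
  assume "\<not> coprime m n"
  then obtain q where q: "q dvd m" "q dvd n" "\<not> is_unit q"
    by (rule not_coprimeE)
  have "q \<noteq> 0"
    using q(2) assms(1) dvd_0_left by blast
  then obtain p where "p dvd q" "prime p"
    using prime_divisor_exists[OF _ q(3)] by blast
  hence "p dvd m" "p dvd n"
    using q(1,2) dvd_trans by blast+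
  thus False
    using assms(2)[OF \<open>prime p\<close>] by blast
qed

lemma prime_not_dvd_form_value:
  fixes a b c x y p :: int
  assumes "prime p" "\<not> (p dvd a \<and> p dvd b \<and> p dvd c)"
    and x: "p dvd x \<longleftrightarrow> p dvd a \<and> \<not> p dvd c" and y: "p dvd y \<longleftrightarrow> \<not> p dvd a"
  shows "\<not> p dvd a * x * x + b * x * y + c * y * y"
proof
  assume dvd_value: "p dvd a * x * x + b * x * y + c * y * y"
  consider "\<not> p dvd a" | "p dvd a" "\<not> p dvd c" | "p dvd a" "p dvd c"
    by blast
  thus False
  proof cases
    case 1
    have "a * x * x = (a * x * x + b * x * y + c * y * y) - y * (b * x + c * y)"
      by (simp add: algebra_simps)
    hence "p dvd a * x * x"
      using dvd_value 1 y by (metis dvd_diff dvd_mult2)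
    thus False
      using 1 x assms(1) by (simp add: prime_dvd_mult_iff)
  next
    case 2
    have "c * y * y = (a * x * x + b * x * y + c * y * y) - x * (a * x + b * y)"
      by (simp add: algebra_simps)
    hence "p dvd c * y * y"
      using dvd_value 2 x by (metis dvd_diff dvd_mult2)
    thus False
      using 2 y assms(1) by (simp add: prime_dvd_mult_iff)
  next
    case 3
    have "b * x * y = (a * x * x + b * x * y + c * y * y) - a * (x * x) - c * (y * y)"
      by (simp add: algebra_simps)
    hence "p dvd b * x * y"
      using dvd_value 3 by (metis dvd_diff dvd_mult2)
    thus False
      using 3 x y assms(1,2) by (simp add: prime_dvd_mult_iff)
  qed
qed

lemma primitive_form_coprime_value:
  fixes a b c n :: int
  assumes primitive: "\<And>x. x dvd a \<Longrightarrow> x dvd b \<Longrightarrow> x dvd c \<Longrightarrow> is_unit x" and "n \<noteq> 0"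
  obtains x y where "coprime (a * x * x + b * x * y + c * y * y) n"
proof -
  define P where "P = prime_factors n"
  define x where "x = (\<Prod>p\<in>{p\<in>P. p dvd a \<and> \<not> p dvd c}. p)"
  define y where "y = (\<Prod>p\<in>{p\<in>P. \<not> p dvd a}. p)"
  have P: "finite P" "\<And>q. q \<in> P \<Longrightarrow> prime q"
    unfolding P_def by (auto intro: in_prime_factors_imp_prime)
  have "\<not> p dvd a * x * x + b * x * y + c * y * y" if p: "prime p" "p dvd n" for p
  proof (rule prime_not_dvd_form_value[OF p(1)])
    have "p \<in> P"
      using p \<open>n \<noteq> 0\<close> unfolding P_def by (simp add: in_prime_factors_iff)
    show "\<not> (p dvd a \<and> p dvd b \<and> p dvd c)"
      using primitive p(1) not_prime_unit by blast
    have "p dvd x \<longleftrightarrow> p \<in> {p\<in>P. p dvd a \<and> \<not> p dvd c}"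
      unfolding x_def using P p(1) by (intro prime_dvd_prod_primes_iff) auto
    thus "p dvd x \<longleftrightarrow> p dvd a \<and> \<not> p dvd c"
      using \<open>p \<in> P\<close> by simp
    have "p dvd y \<longleftrightarrow> p \<in> {p\<in>P. \<not> p dvd a}"
      unfolding y_def using P p(1) by (intro prime_dvd_prod_primes_iff) auto
    thus "p dvd y \<longleftrightarrow> \<not> p dvd a"
      using \<open>p \<in> P\<close> by simp
  qed
  hence "coprime (a * x * x + b * x * y + c * y * y) n"
    using coprime_if_no_common_prime_divisor[OF \<open>n \<noteq> 0\<close>] by blast
  thus thesis
    by (rule that)
qed

theorem lemma3p4:
  fixes d :: int and A :: "qf set" and b :: nat
  assumes "squarefree d" and "d > 1" and "d mod 4 = 1"
    and "frac_ideal d A"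
    and "b > 0"
  shows "\<exists>l\<in>idmul d A A. \<exists>m::int.
           qnorm d l / idnorm (idmul d A A) = of_int m \<and> [m = 1] (mod int b)"
proof -
  define k where "k = d div 4"
  have d: "d = 4 * k + 1"
    using assms(3) unfolding k_def by presburger
  obtain g a e where "g \<noteq> 0" "a > 0" "a dvd e * e + e - k"
    and A: "A = lattice2 (qscale g (qomega (of_int a) 0)) (qscale g (qomega (of_int e) 1))"
    using frac_ideal_standard_basis[OF assms(1,2) d assms(4)] .
  then obtain c where c: "e * e + e - k = a * c"
    by blast
  have "\<And>x. x dvd a \<Longrightarrow> x dvd 2 * e + 1 \<Longrightarrow> x dvd c \<Longrightarrow> is_unit x" "int b \<noteq> 0"
    using standard_form_primitive[OF assms(1) d c] assms(5) by simp_all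
  then obtain x y where "coprime (a * x * x + (2 * e + 1) * x * y + c * y * y) (int b)"
    by (rule primitive_form_coprime_value)
  then obtain t where t: "[(a * x * x + (2 * e + 1) * x * y + c * y * y) * t = 1] (mod int b)"
    using cong_solve_coprime_int by blast
  obtain l where "l \<in> idmul d A A"
    "qnorm d l / idnorm (idmul d A A) = of_int ((t * (a * x * x + (2 * e + 1) * x * y + c * y * y)) ^ 2)"
    unfolding A using standard_lattice_square_norm_quotient[OF assms(1) d c \<open>g \<noteq> 0\<close>] \<open>a > 0\<close> by blast
  moreover have "[(t * (a * x * x + (2 * e + 1) * x * y + c * y * y)) ^ 2 = 1] (mod int b)"
    using cong_pow[OF t, of 2] by (simp add: mult.commute)
  ultimately show ?thesis
    by blast
qed

end
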